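(* Let $(X,\mu)$ be a finite non-atomic measure space, $\mathcal H$ a separable Hilbert space, and $\{\phi_t\}_{t\in X}$ a continuous Bessel family in $\mathcal H$. Then for every measurable function $\tau:X\to[0,1]$ and every $\varepsilon>0$ there exists a measurable set $E\subset X$ such that $$\|S_{\phi,E}-S_{\sqrt{\tau}\phi,X}\|\le\varepsilon\qquad\text{and}\qquad\mu(E)\le\int_X\tau\,d\mu.$$
   Context: A family $\{\phi_t\}_{t\in X}$ of vectors in $\mathcal H$ is a continuous Bessel family (with bound $B$) over the measure space $(X,\mu)$ if (i) for each $f\in\mathcal H$ the function $t\mapsto\langle f,\phi_t\rangle$ is measurable, and (ii) there is $B<\infty$ with $\int_X|\langle f,\phi_t\rangle|^2\,d\mu(t)\le B\|f\|^2$ for all $f\in\mathcal H$. For measurable $E\subset X$, the partial frame operator is $S_{\phi,E}f=\int_E\langle f,\phi_t\rangle\phi_t\,d\mu(t)$, and for measurable $\tau:X\to[0,1]$ the weighted frame operator is $S_{\sqrt{\tau}\phi,X}f=\int_X\tau(t)\langle f,\phi_t\rangle\phi_t\,d\mu(t)$ (integrals defined weakly), $f\in\mathcal H$. *)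

theory Defs
  imports "HOL-Analysis.Analysis"
begin

class scaleC = scaleR +
  fixes scaleC :: "complex \<Rightarrow> 'a \<Rightarrow> 'a" (infixr \<open>*\<^sub>C\<close> 75)
  assumes scaleR_scaleC: "scaleR r = scaleC (complex_of_real r)"

class complex_vector = scaleC + ab_group_add +
  assumes scaleC_add_right: "a *\<^sub>C (x + y) = a *\<^sub>C x + a *\<^sub>C y"
    and scaleC_add_left: "(a + b) *\<^sub>C x = a *\<^sub>C x + b *\<^sub>C x"
    and scaleC_scaleC: "a *\<^sub>C b *\<^sub>C x = (a * b) *\<^sub>C x"
    and scaleC_one: "1 *\<^sub>C x = x"

subclass (in complex_vector) real_vector
  by standard (simp_all add: scaleR_scaleC scaleC_add_right scaleC_add_left scaleC_scaleC scaleC_one)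

class complex_normed_vector = complex_vector + real_normed_vector +
  assumes norm_scaleC: "norm (a *\<^sub>C x) = cmod a * norm x"

class complex_inner = complex_normed_vector +
  fixes cinner :: "'a \<Rightarrow> 'a \<Rightarrow> complex"
  assumes cinner_commute: "cinner x y = cnj (cinner y x)"
    and cinner_add_left: "cinner (x + y) z = cinner x z + cinner y z"
    and cinner_scaleC_left: "cinner (a *\<^sub>C x) y = a * cinner x y"
    and cinner_self: "cinner x x = complex_of_real ((norm x)\<^sup>2)"

definition nonatomic :: "'b measure \<Rightarrow> bool" where
  "nonatomic M \<longleftrightarrow> (\<forall>A\<in>sets M. 0 < emeasure M A \<longrightarrow>
      (\<exists>B\<in>sets M. B \<subseteq> A \<and> 0 < emeasure M B \<and> emeasure M B < emeasure M A))"

definition continuous_bessel :: "'b measure \<Rightarrow> ('b \<Rightarrow> 'a::complex_inner) \<Rightarrow> real \<Rightarrow> bool" where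
  "continuous_bessel M \<phi> B \<longleftrightarrow>
     (\<forall>f. (\<lambda>t. cinner f (\<phi> t)) \<in> borel_measurable M) \<and>
     (\<forall>f. (\<integral>\<^sup>+ t. ennreal ((cmod (cinner f (\<phi> t)))\<^sup>2) \<partial>M) \<le> ennreal (B * (norm f)\<^sup>2))"

definition continuous_bessel_family :: "'b measure \<Rightarrow> ('b \<Rightarrow> 'a::complex_inner) \<Rightarrow> bool" where
  "continuous_bessel_family M \<phi> \<longleftrightarrow> (\<exists>B. continuous_bessel M \<phi> B)"

text \<open>Weighted frame operator S_{sqrt tau phi, X}, defined weakly:
  the vector g with <g,h> = integral of tau t <f,phi_t> <phi_t,h> for all h.\<close>
definition weighted_frame_op ::
  "'b measure \<Rightarrow> ('b \<Rightarrow> 'a::complex_inner) \<Rightarrow> ('b \<Rightarrow> real) \<Rightarrow> 'a \<Rightarrow> 'a" where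
  "weighted_frame_op M \<phi> \<tau> f =
     (THE g. \<forall>h. cinner g h =
        (\<integral> t. complex_of_real (\<tau> t) * cinner f (\<phi> t) * cinner (\<phi> t) h \<partial>M))"

definition partial_frame_op ::
  "'b measure \<Rightarrow> ('b \<Rightarrow> 'a::complex_inner) \<Rightarrow> 'b set \<Rightarrow> 'a \<Rightarrow> 'a" where
  "partial_frame_op M \<phi> E f =
     (THE g. \<forall>h. cinner g h =
        (\<integral> t\<in>E. cinner f (\<phi> t) * cinner (\<phi> t) h \<partial>M))"

end

theory Submission
  imports Defs
begin

text \<open>Since the Hilbert space is separable, \<open>X\<close> splits into countably many measurable pieces
  on each of which \<open>\<phi> t\<close> stays within \<open>r\<close> of a fixed vector \<open>d\<^sub>j\<close>. By non-atomicity
  (Sierpinski's intermediate value theorem) each piece contains a subset whose measure is the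
  integral of \<open>\<tau>\<close> over the piece; let \<open>E\<close> be their union. Then \<open>1\<^sub>E - \<tau>\<close> integrates to
  zero on every piece, so the difference of the two frame operators vanishes once \<open>\<phi> t\<close> is
  replaced by \<open>d\<^sub>j\<close>; the error of that replacement is \<open>O(r)\<close> by Cauchy-Schwarz and the Bessel
  bound, while \<open>\<mu>(E) = \<integral>\<tau>\<close>.\<close>

lemma scaleC_zero_right [simp]: "a *\<^sub>C (0::'a::complex_vector) = 0"
  by (metis add_cancel_right_right scaleC_add_right)

lemma cinner_zero_left [simp]: "cinner (0::'a::complex_inner) y = 0"
  by (metis add_cancel_right_right cinner_add_left)

lemma cinner_zero_right [simp]: "cinner x (0::'a::complex_inner) = 0"
  by (subst cinner_commute) simp

lemma cinner_add_right: "cinner (x::'a::complex_inner) (y + z) = cinner x y + cinner x z"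
  by (subst (1 2 3) cinner_commute) (simp add: cinner_add_left)

lemma cinner_scaleC_right: "cinner (x::'a::complex_inner) (a *\<^sub>C y) = cnj a * cinner x y"
  by (subst (1 2) cinner_commute) (simp add: cinner_scaleC_left)

lemma cinner_minus_left: "cinner (- x) (y::'a::complex_inner) = - cinner x y"
  by (metis cinner_add_left cinner_zero_left neg_eq_iff_add_eq_0)

lemma cinner_minus_right: "cinner (x::'a::complex_inner) (- y) = - cinner x y"
  by (subst (1 2) cinner_commute) (simp add: cinner_minus_left)

lemma cinner_diff_left: "cinner (x - y) (z::'a::complex_inner) = cinner x z - cinner y z"
  using cinner_add_left[of x "- y" z] by (simp add: cinner_minus_left)

lemma cinner_diff_right: "cinner (x::'a::complex_inner) (y - z) = cinner x y - cinner x z"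
  using cinner_add_right[of x y "- z"] by (simp add: cinner_minus_right)

lemma cinner_scaleR_right: "cinner (x::'a::complex_inner) (r *\<^sub>R y) = of_real r * cinner x y"
  by (simp add: scaleR_scaleC cinner_scaleC_right)

lemma cinner_self_eq_zero [simp]: "cinner x x = 0 \<longleftrightarrow> (x::'a::complex_inner) = 0"
  by (simp add: cinner_self)

lemma cmod_cinner_commute: "cmod (cinner x y) = cmod (cinner y (x::'a::complex_inner))"
  by (metis cinner_commute complex_mod_cnj)

lemma cinner_left_eqI:
  fixes g g' :: "'a::complex_inner"
  assumes "\<And>h. cinner g h = cinner g' h"
  shows "g = g'"
proof -
  have "cinner (g - g') (g - g') = 0" using assms by (simp add: cinner_diff_left)
  then show ?thesis by simp
qed

lemma power2_norm_add:
  fixes a b :: "'a::complex_inner"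
  shows "(norm (a + b))\<^sup>2 = (norm a)\<^sup>2 + (norm b)\<^sup>2 + 2 * Re (cinner a b)"
proof -
  have "complex_of_real ((norm (a + b))\<^sup>2) = cinner (a + b) (a + b)"
    by (rule cinner_self[symmetric])
  also have "\<dots> = cinner a a + cinner b b + (cinner a b + cnj (cinner a b))"
    by (simp add: cinner_add_left cinner_add_right cinner_commute[of b a])
  also have "\<dots> = complex_of_real ((norm a)\<^sup>2 + (norm b)\<^sup>2 + 2 * Re (cinner a b))"
    by (simp add: cinner_self complex_add_cnj)
  finally show ?thesis by (simp only: of_real_eq_iff)
qed

lemma power2_norm_diff:
  fixes a b :: "'a::complex_inner"
  shows "(norm (a - b))\<^sup>2 = (norm a)\<^sup>2 + (norm b)\<^sup>2 - 2 * Re (cinner a b)"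
  using power2_norm_add[of a "- b"] by (simp add: cinner_minus_right)

lemma parallelogram_law:
  fixes a b :: "'a::complex_inner"
  shows "(norm (a - b))\<^sup>2 + (norm (a + b))\<^sup>2 = 2 * (norm a)\<^sup>2 + 2 * (norm b)\<^sup>2"
  using power2_norm_add[of a b] power2_norm_diff[of a b] by simp

lemma norm_cinner_le: "cmod (cinner x y) \<le> norm x * norm (y::'a::complex_inner)"
proof (cases "y = 0")
  case True then show ?thesis by simp
next
  case False
  define c where "c = cinner x y / complex_of_real ((norm y)\<^sup>2)"
  have ny: "norm y > 0" using False by simp
  have e1: "cinner (x - c *\<^sub>C y) (x - c *\<^sub>C y) =
        cinner x x - cnj c * cinner x y - c * cinner y x + c * cnj c * cinner y y"
    by (simp add: cinner_diff_left cinner_diff_right cinner_scaleC_left cinner_scaleC_right algebra_simps)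
  have cyx: "cinner y x = cnj (cinner x y)" by (rule cinner_commute)
  have zz: "cinner x y * cnj (cinner x y) = (complex_of_real (cmod (cinner x y)))\<^sup>2"
    by (metis complex_norm_square of_real_power)
  have "c * cinner y x = (cmod (cinner x y))\<^sup>2 / (norm y)\<^sup>2"
    unfolding c_def cyx using zz by simp
  moreover have "cnj c * cinner x y = (cmod (cinner x y))\<^sup>2 / (norm y)\<^sup>2"
    unfolding c_def using zz by (simp add: mult.commute)
  moreover have "c * cnj c * cinner y y = (cmod (cinner x y))\<^sup>2 / (norm y)\<^sup>2"
    unfolding c_def using ny zz by (simp add: cinner_self power2_eq_square)
  ultimately have "cinner (x - c *\<^sub>C y) (x - c *\<^sub>C y) = complex_of_real ((norm x)\<^sup>2 - (cmod (cinner x y))\<^sup>2 / (norm y)\<^sup>2)"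
    using e1 by (simp add: cinner_self)
  then have "complex_of_real ((norm (x - c *\<^sub>C y))\<^sup>2) = complex_of_real ((norm x)\<^sup>2 - (cmod (cinner x y))\<^sup>2 / (norm y)\<^sup>2)"
    by (simp only: cinner_self)
  then have "(norm (x - c *\<^sub>C y))\<^sup>2 = (norm x)\<^sup>2 - (cmod (cinner x y))\<^sup>2 / (norm y)\<^sup>2"
    by (simp only: of_real_eq_iff)
  then have "(cmod (cinner x y))\<^sup>2 / (norm y)\<^sup>2 \<le> (norm x)\<^sup>2" by (metis diff_ge_0_iff_ge zero_le_power2)
  then have "(cmod (cinner x y))\<^sup>2 \<le> (norm x * norm y)\<^sup>2" using ny by (simp add: field_simps)
  then show ?thesis by (meson abs_le_square_iff abs_of_nonneg mult_nonneg_nonneg norm_ge_zero power2_le_imp_le)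
qed

lemma Cauchy_of_minimizing_sequence:
  fixes x :: "nat \<Rightarrow> 'a::complex_inner"
  assumes mid: "\<And>n m. d \<le> (norm ((1/2) *\<^sub>R (x n + x m)))\<^sup>2"
    and small: "\<And>n. (norm (x n))\<^sup>2 < d + 1 / (real n + 1)"
  shows "Cauchy x"
proof (rule CauchyI)
  fix e :: real assume e: "0 < e"
  have close: "(norm (x n - x m))\<^sup>2 \<le> 2 / (real n + 1) + 2 / (real m + 1)" for n m
  proof -
    have "4 * d \<le> (norm (x n + x m))\<^sup>2"
      using mid[of n m] by (simp add: power2_eq_square)
    then show ?thesis
      using parallelogram_law[of "x n" "x m"] small[of n] small[of m] by linarith
  qed
  obtain N :: nat where N: "4 / e\<^sup>2 < real N" using reals_Archimedean2 by blast
  have "4 < real N * e\<^sup>2" "0 < e\<^sup>2"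
    using N e by (simp_all add: field_simps)
  then have "4 < (real N + 1) * e\<^sup>2"
    unfolding distrib_right by linarith
  then have tail_small: "4 / (real N + 1) < e\<^sup>2"
    by (simp add: pos_divide_less_eq mult.commute)
  have tail: "2 / (real n + 1) \<le> 2 / (real N + 1)" if "N \<le> n" for n
    using that by (simp add: frac_le)
  have "(norm (x m - x n))\<^sup>2 < e\<^sup>2" if "N \<le> m" "N \<le> n" for m n
    using close[of m n] tail[OF that(1)] tail[OF that(2)] tail_small by linarith
  then have "norm (x m - x n) < e" if "N \<le> m" "N \<le> n" for m n
    using power_less_imp_less_base[OF _ less_imp_le[OF e]] that by blast
  then show "\<exists>M. \<forall>m\<ge>M. \<forall>n\<ge>M. norm (x m - x n) < e"
    by blast
qed

lemma exists_min_norm_in_level_set: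
  fixes l :: "'a::{complex_inner, complete_space} \<Rightarrow> complex"
  assumes add: "\<And>x y. l (x + y) = l x + l y"
    and scale: "\<And>a x. l (a *\<^sub>C x) = a * l x"
    and bounded: "\<And>x. cmod (l x) \<le> K * norm x"
    and u: "l u = 1"
  shows "\<exists>z. l z = 1 \<and> (\<forall>x. l x = 1 \<longrightarrow> norm z \<le> norm x)"
proof -
  have l_diff: "l (x - y) = l x - l y" for x y
    using add[of "x - y" y] by simp
  define S where "S = {(norm x)\<^sup>2 | x. l x = 1}"
  define d where "d = Inf S"
  have S_bdd: "bdd_below S" unfolding S_def by (rule bdd_belowI[of _ 0]) auto
  have d_le: "d \<le> (norm x)\<^sup>2" if "l x = 1" for x
    unfolding d_def by (rule cInf_lower[OF _ S_bdd]) (use that S_def in auto)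
  have "\<exists>x. l x = 1 \<and> (norm x)\<^sup>2 < d + 1 / (real n + 1)" for n
  proof -
    have "Inf S < d + 1 / (real n + 1)" unfolding d_def by simp
    then obtain s where "s \<in> S" "s < d + 1 / (real n + 1)"
      using cInf_lessD[of S] u S_def by blast
    then show ?thesis unfolding S_def by auto
  qed
  then obtain x where x1: "\<And>n. l (x n) = 1" and x_small: "\<And>n. (norm (x n))\<^sup>2 < d + 1 / (real n + 1)"
    by metis
  have "Cauchy x"
  proof (rule Cauchy_of_minimizing_sequence[OF _ x_small])
    show "d \<le> (norm ((1/2) *\<^sub>R (x n + x m)))\<^sup>2" for n m
      using x1 by (intro d_le) (simp add: scaleR_scaleC scale add)
  qed
  then obtain z where xz: "x \<longlonglongrightarrow> z"
    using Cauchy_convergent convergent_def by blast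
  have "(\<lambda>n. l (x n - z)) \<longlonglongrightarrow> 0"
  proof (rule Lim_null_comparison)
    show "\<forall>\<^sub>F n in sequentially. norm (l (x n - z)) \<le> K * norm (x n - z)"
      using bounded by simp
    show "(\<lambda>n. K * norm (x n - z)) \<longlonglongrightarrow> 0"
      using xz by (intro tendsto_mult_right_zero tendsto_norm_zero LIM_zero)
  qed
  then have "l z = 1"
    using x1 by (simp add: l_diff LIMSEQ_const_iff)
  moreover have "(norm z)\<^sup>2 \<le> d"
  proof (rule LIMSEQ_le)
    show "(\<lambda>n. (norm (x n))\<^sup>2) \<longlonglongrightarrow> (norm z)\<^sup>2" by (intro tendsto_intros xz)
    show "(\<lambda>n. d + 1 / (real n + 1)) \<longlonglongrightarrow> d"
      using LIMSEQ_inverse_real_of_nat_add[of d] by (simp add: inverse_eq_divide add.commute)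
    show "\<exists>N. \<forall>n\<ge>N. (norm (x n))\<^sup>2 \<le> d + 1 / (real n + 1)"
      using x_small less_imp_le by blast
  qed
  moreover have "norm z \<le> norm y" if "l y = 1" for y
  proof (rule power2_le_imp_le)
    show "(norm z)\<^sup>2 \<le> (norm y)\<^sup>2"
      using \<open>(norm z)\<^sup>2 \<le> d\<close> d_le[OF that] by linarith
  qed simp
  ultimately show ?thesis by blast
qed

lemma min_norm_in_level_set_orthogonal:
  fixes l :: "'a::complex_inner \<Rightarrow> complex"
  assumes add: "\<And>x y. l (x + y) = l x + l y"
    and scale: "\<And>a x. l (a *\<^sub>C x) = a * l x"
    and z: "l z = 1" "\<And>x. l x = 1 \<Longrightarrow> norm z \<le> norm x"
    and w: "l w = 0"
  shows "cinner w z = 0"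
proof -
  define c where "c = cinner z w"
  define t where "t = 1 / ((norm w)\<^sup>2 + 1)"
  have t: "t > 0" "t * (norm w)\<^sup>2 < 1"
    unfolding t_def by (simp_all add: add_nonneg_pos)
  have "cnj c * c = complex_of_real ((cmod c)\<^sup>2)"
    by (metis complex_norm_square mult.commute)
  then have "cinner z ((- (of_real t * c)) *\<^sub>C w) = complex_of_real (- t * (cmod c)\<^sup>2)"
    by (simp add: cinner_scaleC_right c_def[symmetric])
  then have "(norm (z + (- (of_real t * c)) *\<^sub>C w))\<^sup>2
      = (norm z)\<^sup>2 + (t * cmod c)\<^sup>2 * (norm w)\<^sup>2 - 2 * t * (cmod c)\<^sup>2"
    using t by (simp add: power2_norm_add norm_scaleC norm_mult power_mult_distrib)
  moreover have "(norm z)\<^sup>2 \<le> (norm (z + (- (of_real t * c)) *\<^sub>C w))\<^sup>2"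
    using z w by (simp add: add scale power_mono)
  ultimately have "0 \<le> t * (cmod c)\<^sup>2 * (t * (norm w)\<^sup>2 - 2)"
    by (simp add: power2_eq_square algebra_simps)
  moreover have "t * (cmod c)\<^sup>2 * (t * (norm w)\<^sup>2 - 2) < 0" if "c \<noteq> 0"
    using t that by (intro mult_pos_neg) auto
  ultimately have "c = 0" by force
  then show ?thesis
    unfolding c_def by (subst cinner_commute) simp
qed

lemma riesz_representation:
  fixes l :: "'a::{complex_inner, complete_space} \<Rightarrow> complex"
  assumes add: "\<And>x y. l (x + y) = l x + l y"
    and scale: "\<And>a x. l (a *\<^sub>C x) = a * l x"
    and bounded: "\<And>x. cmod (l x) \<le> K * norm x"
  shows "\<exists>g. \<forall>h. l h = cinner h g"
proof (cases "\<exists>u. l u = 1")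
  case True
  then obtain z where z: "l z = 1" "\<And>x. l x = 1 \<Longrightarrow> norm z \<le> norm x"
    using exists_min_norm_in_level_set[OF add scale bounded] by blast
  have "l h = cinner h ((1 / (norm z)\<^sup>2) *\<^sub>R z)" for h
  proof -
    have "l (h - l h *\<^sub>C z) = 0"
      using add[of "h - l h *\<^sub>C z" "l h *\<^sub>C z"] z(1) by (simp add: scale)
    then have "cinner (h - l h *\<^sub>C z) z = 0"
      using min_norm_in_level_set_orthogonal[OF add scale z] by blast
    moreover have "z \<noteq> 0"
      using z(1) scale[of 0 0] by auto
    ultimately show ?thesis
      by (simp add: cinner_diff_left cinner_scaleC_left cinner_self cinner_scaleR_right)
  qed
  then show ?thesis by blast
next
  case False
  have "l x = 0" for x
    using False scale[of "1 / l x" x] by (cases "l x = 0") auto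
  then show ?thesis by (intro exI[of _ 0]) simp
qed

lemma riesz_representation_conj:
  fixes L :: "'a::{complex_inner, complete_space} \<Rightarrow> complex"
  assumes add: "\<And>x y. L (x + y) = L x + L y"
    and scale: "\<And>a x. L (a *\<^sub>C x) = cnj a * L x"
    and bounded: "\<And>x. cmod (L x) \<le> K * norm x"
  shows "\<exists>g. \<forall>h. cinner g h = L h"
proof -
  obtain g where "\<forall>h. cnj (L h) = cinner h g"
    using riesz_representation[of "\<lambda>h. cnj (L h)" K] add scale bounded by auto
  then show ?thesis by (metis cinner_commute complex_cnj_cnj)
qed

lemma norm_cinner_product_diff_le:
  fixes f h p q :: "'a::complex_inner"
  assumes pq: "norm (p - q) \<le> r"
  shows "cmod (cinner f p * cinner p h - cinner f q * cinner q h)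
    \<le> r * norm f * cmod (cinner h p) + r * norm h * cmod (cinner f p) + r\<^sup>2 * norm f * norm h"
proof -
  have r: "0 \<le> r"
    using pq norm_ge_zero order_trans by blast
  have f: "cmod (cinner f p - cinner f q) \<le> norm f * r"
    using norm_cinner_le[of f "p - q"] pq by (simp add: cinner_diff_right mult_left_mono order_trans)
  have h: "cmod (cinner p h - cinner q h) \<le> r * norm h"
    using norm_cinner_le[of "p - q" h] pq by (simp add: cinner_diff_left mult_right_mono order_trans)
  have q: "cmod (cinner f q) \<le> cmod (cinner f p) + norm f * r"
    using f norm_triangle_ineq3[of "cinner f p" "cinner f q"] by linarith
  have "cinner f p * cinner p h - cinner f q * cinner q h
      = (cinner f p - cinner f q) * cinner p h + cinner f q * (cinner p h - cinner q h)"
    by (simp add: algebra_simps)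
  then have "cmod (cinner f p * cinner p h - cinner f q * cinner q h)
      \<le> cmod (cinner f p - cinner f q) * cmod (cinner p h) + cmod (cinner f q) * cmod (cinner p h - cinner q h)"
    by (metis norm_mult norm_triangle_ineq)
  also have "\<dots> \<le> (norm f * r) * cmod (cinner p h) + (cmod (cinner f p) + norm f * r) * (r * norm h)"
    using f h q r by (intro add_mono mult_mono) auto
  finally show ?thesis
    by (simp add: cmod_cinner_commute[of p h] algebra_simps power2_eq_square)
qed

lemma onorm_le_of_cinner_le:
  fixes T :: "'a::complex_inner \<Rightarrow> 'a"
  assumes T: "\<And>f h. cmod (cinner (T f) h) \<le> C * norm f * norm h" and C: "0 \<le> C"
  shows "onorm T \<le> C"
proof (rule onorm_bound[OF C])
  fix f
  show "norm (T f) \<le> C * norm f"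
  proof (cases "T f = 0")
    case False
    have "norm (T f) * norm (T f) \<le> (C * norm f) * norm (T f)"
      using T[of f "T f"] by (simp add: cinner_self power2_eq_square norm_mult)
    then show ?thesis
      using False by (simp add: mult_le_cancel_right)
  qed (use C in simp)
qed

text \<open>With a dense sequence \<open>d\<close>, the squared norm is a countable supremum of real-affine
  functionals; this turns weak measurability into measurability of distances.\<close>
lemma power2_norm_le_iff_dense:
  fixes w :: "'a::complex_inner"
  assumes d: "\<And>x e. 0 < e \<Longrightarrow> \<exists>k. dist x (d k) < e"
  shows "(norm w)\<^sup>2 \<le> s \<longleftrightarrow> (\<forall>k. 2 * Re (cinner w (d k)) - (norm (d k))\<^sup>2 \<le> s)"
proof
  have le: "2 * Re (cinner w (d k)) - (norm (d k))\<^sup>2 \<le> (norm w)\<^sup>2" for k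
    using power2_norm_diff[of w "d k"] zero_le_power2[of "norm (w - d k)"] by linarith
  show "(norm w)\<^sup>2 \<le> s \<Longrightarrow> \<forall>k. 2 * Re (cinner w (d k)) - (norm (d k))\<^sup>2 \<le> s"
    using le order_trans by blast
  assume all: "\<forall>k. 2 * Re (cinner w (d k)) - (norm (d k))\<^sup>2 \<le> s"
  show "(norm w)\<^sup>2 \<le> s"
  proof (rule ccontr)
    assume "\<not> (norm w)\<^sup>2 \<le> s"
    then obtain k where "norm (w - d k) < sqrt ((norm w)\<^sup>2 - s)"
      using d[of "sqrt ((norm w)\<^sup>2 - s)" w] by (auto simp: dist_norm)
    then have "(norm (w - d k))\<^sup>2 < (sqrt ((norm w)\<^sup>2 - s))\<^sup>2"
      by (rule power_strict_mono) auto
    then have "(norm (w - d k))\<^sup>2 < (norm w)\<^sup>2 - s"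
      using \<open>\<not> (norm w)\<^sup>2 \<le> s\<close> by simp
    then show False
      using power2_norm_diff[of w "d k"] spec[OF all, of k] by linarith
  qed
qed

lemma cinner_The_representation:
  fixes L :: "'a::complex_inner \<Rightarrow> complex"
  assumes "\<exists>g. \<forall>h. cinner g h = L h"
  shows "cinner (THE g. \<forall>h. cinner g h = L h) h = L h"
proof -
  have "\<exists>!g. \<forall>h. cinner g h = L h"
    using assms by (auto intro: cinner_left_eqI)
  from theI'[OF this] show ?thesis by blast
qed

lemma integral_eq_suminf_level_sets:
  fixes f :: "'b \<Rightarrow> 'c::{banach, second_countable_topology}" and k :: "'b \<Rightarrow> nat"
  assumes [measurable]: "k \<in> M \<rightarrow>\<^sub>M count_space UNIV" and f: "integrable M f"
  shows "(\<integral>t. f t \<partial>M) = (\<Sum>j. \<integral>t. indicator {t \<in> space M. k t = j} t *\<^sub>R f t \<partial>M)"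
proof -
  have UN: "(\<Union>j. {t \<in> space M. k t = j}) = space M"
    by blast
  then have "(\<integral>t. f t \<partial>M) = (LINT t:(\<Union>j. {t \<in> space M. k t = j})|M. f t)"
    using set_integral_space[OF f] by simp
  also have "\<dots> = (\<Sum>j. LINT t:{t \<in> space M. k t = j}|M. f t)"
  proof (rule lebesgue_integral_countable_add)
    show "set_integrable M (\<Union>j. {t \<in> space M. k t = j}) f"
      unfolding set_integrable_def UN by (rule integrable_mult_indicator[OF _ f]) simp
  qed (measurable, blast)
  finally show ?thesis
    by (simp add: set_lebesgue_integral_def)
qed

lemma integral_mult_level_sets_eq_0:
  fixes g :: "'b \<Rightarrow> real" and c :: "nat \<Rightarrow> complex" and k :: "'b \<Rightarrow> nat"
  assumes [measurable]: "k \<in> M \<rightarrow>\<^sub>M count_space UNIV"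
    and g: "\<And>j. (\<integral>t. indicator {t \<in> space M. k t = j} t * g t \<partial>M) = 0"
    and int: "integrable M (\<lambda>t. complex_of_real (g t) * c (k t))"
  shows "(\<integral>t. complex_of_real (g t) * c (k t) \<partial>M) = 0"
proof -
  have "(\<integral>t. indicator {t \<in> space M. k t = j} t *\<^sub>R (complex_of_real (g t) * c (k t)) \<partial>M)
      = (\<integral>t. complex_of_real (indicator {t \<in> space M. k t = j} t * g t) * c j \<partial>M)" for j
    by (intro Bochner_Integration.integral_cong) (auto simp: indicator_def)
  also have "\<dots> j = 0" for j
    using g[of j] by (simp only: integral_mult_left_zero integral_complex_of_real) simp
  finally show ?thesis
    using integral_eq_suminf_level_sets[OF assms(1) int] by simp
qed

lemma integrable_mult_of_square_integrable:
  fixes u v :: "'b \<Rightarrow> real"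
  assumes [measurable]: "u \<in> borel_measurable M" "v \<in> borel_measurable M"
    and "integrable M (\<lambda>t. (u t)\<^sup>2)" "integrable M (\<lambda>t. (v t)\<^sup>2)"
  shows "integrable M (\<lambda>t. u t * v t)"
proof (rule Bochner_Integration.integrable_bound)
  show "integrable M (\<lambda>t. (u t)\<^sup>2 + (v t)\<^sup>2)"
    using assms(3,4) by simp
  show "AE t in M. norm (u t * v t) \<le> norm ((u t)\<^sup>2 + (v t)\<^sup>2)"
  proof (rule AE_I2)
    fix t
    have "2 * (\<bar>u t\<bar> * \<bar>v t\<bar>) \<le> (u t)\<^sup>2 + (v t)\<^sup>2"
      using sum_squares_bound[of "\<bar>u t\<bar>" "\<bar>v t\<bar>"] by (simp add: mult.assoc)
    moreover have "0 \<le> \<bar>u t\<bar> * \<bar>v t\<bar>" by simp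
    ultimately have "\<bar>u t\<bar> * \<bar>v t\<bar> \<le> (u t)\<^sup>2 + (v t)\<^sup>2" by linarith
    then show "norm (u t * v t) \<le> norm ((u t)\<^sup>2 + (v t)\<^sup>2)"
      using sum_power2_ge_zero[of "u t" "v t"] by (simp add: abs_mult)
  qed
qed simp

lemma integral_mult_le_Cauchy_Schwarz:
  fixes u v :: "'b \<Rightarrow> real"
  assumes [measurable]: "u \<in> borel_measurable M" "v \<in> borel_measurable M"
    and nonneg: "\<And>t. t \<in> space M \<Longrightarrow> 0 \<le> u t" "\<And>t. t \<in> space M \<Longrightarrow> 0 \<le> v t"
    and sq: "integrable M (\<lambda>t. (u t)\<^sup>2)" "integrable M (\<lambda>t. (v t)\<^sup>2)"
  shows "(\<integral>t. u t * v t \<partial>M) \<le> sqrt (\<integral>t. (u t)\<^sup>2 \<partial>M) * sqrt (\<integral>t. (v t)\<^sup>2 \<partial>M)"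
proof -
  have nn: "(\<integral>\<^sup>+t. ennreal (w t) \<partial>M) = ennreal (\<integral>t. w t \<partial>M)"
    if "integrable M w" "\<And>t. t \<in> space M \<Longrightarrow> 0 \<le> w t" for w
    using that by (intro nn_integral_eq_integral AE_I2) auto
  have uv: "integrable M (\<lambda>t. u t * v t)"
    using integrable_mult_of_square_integrable[OF assms(1,2) sq] .
  have "(\<integral>\<^sup>+t. ennreal (u t) * ennreal (v t) \<partial>M) = (\<integral>\<^sup>+t. ennreal (u t * v t) \<partial>M)"
    using nonneg by (intro nn_integral_cong) (simp add: ennreal_mult)
  also have "\<dots> = ennreal (\<integral>t. u t * v t \<partial>M)"
    using nonneg by (intro nn[OF uv]) simp
  finally have I_uv: "(\<integral>\<^sup>+t. ennreal (u t) * ennreal (v t) \<partial>M) = ennreal (\<integral>t. u t * v t \<partial>M)" .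
  have I_sq: "(\<integral>\<^sup>+t. ennreal (w t) ^ 2 \<partial>M) = ennreal (\<integral>t. (w t)\<^sup>2 \<partial>M)"
    if "integrable M (\<lambda>t. (w t)\<^sup>2)" "\<And>t. t \<in> space M \<Longrightarrow> 0 \<le> w t" for w
  proof -
    have "(\<integral>\<^sup>+t. ennreal (w t) ^ 2 \<partial>M) = (\<integral>\<^sup>+t. ennreal ((w t)\<^sup>2) \<partial>M)"
      using that(2) by (intro nn_integral_cong) (simp add: ennreal_power)
    then show ?thesis
      using nn[OF that(1)] by simp
  qed
  have "(\<integral>\<^sup>+t. ennreal (u t) * ennreal (v t) \<partial>M)\<^sup>2
      \<le> (\<integral>\<^sup>+t. ennreal (u t) ^ 2 \<partial>M) * (\<integral>\<^sup>+t. ennreal (v t) ^ 2 \<partial>M)"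
    by (rule Cauchy_Schwarz_nn_integral) measurable
  then have "ennreal ((\<integral>t. u t * v t \<partial>M)\<^sup>2) \<le> ennreal ((\<integral>t. (u t)\<^sup>2 \<partial>M) * (\<integral>t. (v t)\<^sup>2 \<partial>M))"
    using nonneg uv sq by (simp add: I_uv I_sq ennreal_power ennreal_mult integral_nonneg_AE)
  then have "(\<integral>t. u t * v t \<partial>M)\<^sup>2 \<le> (\<integral>t. (u t)\<^sup>2 \<partial>M) * (\<integral>t. (v t)\<^sup>2 \<partial>M)"
    by (simp add: integral_nonneg_AE)
  then show ?thesis
    by (simp add: real_le_rsqrt real_sqrt_mult[symmetric])
qed

context finite_measure
begin

lemma nonatomic_measureD:
  assumes "nonatomic M" "A \<in> sets M" "0 < measure M A"
  shows "\<exists>B\<in>sets M. B \<subseteq> A \<and> 0 < measure M B \<and> measure M B < measure M A"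
proof -
  have "0 < emeasure M A"
    using assms(3) by (simp add: emeasure_eq_measure)
  then obtain B where "B \<in> sets M" "B \<subseteq> A" "0 < emeasure M B" "emeasure M B < emeasure M A"
    using assms(1,2) unfolding nonatomic_def by blast
  then show ?thesis
    by (intro bexI[of _ B]) (auto simp: emeasure_eq_measure ennreal_less_iff)
qed

lemma nonatomic_exists_small_subset:
  assumes na: "nonatomic M" and A: "A \<in> sets M" "0 < measure M A" and d: "0 < d"
  shows "\<exists>B\<in>sets M. B \<subseteq> A \<and> 0 < measure M B \<and> measure M B \<le> d"
proof -
  have halving: "\<exists>B\<in>sets M. B \<subseteq> A \<and> 0 < measure M B \<and> measure M B \<le> measure M A / 2 ^ n" for n
  proof (induction n)
    case (Suc n)
    then obtain B where B: "B \<in> sets M" "B \<subseteq> A" "0 < measure M B"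
        "measure M B \<le> measure M A / 2 ^ n"
      by blast
    then obtain C where C: "C \<in> sets M" "C \<subseteq> B" "0 < measure M C" "measure M C < measure M B"
      using nonatomic_measureD[OF na] by blast
    \<comment> \<open>one of \<open>C\<close> and \<open>B - C\<close> has at most half the measure of \<open>B\<close>\<close>
    have "measure M (B - C) = measure M B - measure M C"
      using finite_measure_Diff[OF B(1) C(1,2)] .
    have half: "measure M B / 2 \<le> measure M A / 2 ^ Suc n"
      using divide_right_mono[OF B(4), of 2] by simp
    show ?case
    proof (cases "measure M C \<le> measure M B / 2")
      case True
      then show ?thesis using B C half by (intro bexI[of _ C]) auto
    next
      case False
      then show ?thesis using B C half \<open>measure M (B - C) = _\<close> by (intro bexI[of _ "B - C"]) auto
    qed
  qed (use A in auto)
  obtain n :: nat where "measure M A / d < 2 ^ n"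
    using real_arch_pow[of 2 "measure M A / d"] by auto
  then have "measure M A / 2 ^ n < d"
    using d by (simp add: field_simps)
  moreover obtain B where "B \<in> sets M" "B \<subseteq> A" "0 < measure M B" "measure M B \<le> measure M A / 2 ^ n"
    using halving[of n] by blast
  ultimately show ?thesis by (intro bexI[of _ B]) auto
qed

lemma nonatomic_greedy_step:
  assumes B: "B \<in> sets M" "measure M B \<le> c"
  shows "\<exists>C\<in>sets M. C \<subseteq> A - B \<and> measure M B + measure M C \<le> c \<and>
    (\<forall>D\<in>sets M. D \<subseteq> A - B \<and> measure M B + measure M D \<le> c \<longrightarrow> measure M D \<le> 2 * measure M C)"
proof -
  define V where "V = measure M ` {D \<in> sets M. D \<subseteq> A - B \<and> measure M B + measure M D \<le> c}"
  have "0 \<in> V"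
    using B unfolding V_def by (auto intro!: image_eqI[of _ _ "{}"])
  moreover have V_bdd: "bdd_above V"
    unfolding V_def by (rule bdd_aboveI[of _ "measure M (space M)"]) (auto intro: bounded_measure)
  ultimately have V_Sup: "v \<le> Sup V" if "v \<in> V" for v
    using that by (simp add: cSup_upper)
  have "\<exists>C\<in>sets M. C \<subseteq> A - B \<and> measure M B + measure M C \<le> c \<and> Sup V \<le> 2 * measure M C"
  proof (cases "Sup V = 0")
    case True
    then show ?thesis using B by (intro bexI[of _ "{}"]) auto
  next
    case False
    then have "Sup V / 2 < Sup V"
      using V_Sup[OF \<open>0 \<in> V\<close>] by simp
    then obtain v where "v \<in> V" "Sup V / 2 < v"
      using less_cSupE[of "Sup V / 2" V] \<open>0 \<in> V\<close> by blast
    then obtain C where "C \<in> sets M" "C \<subseteq> A - B" "measure M B + measure M C \<le> c"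
        "Sup V / 2 < measure M C"
      unfolding V_def by blast
    then show ?thesis by (intro bexI[of _ C]) auto
  qed
  moreover have "measure M D \<le> Sup V"
    if "D \<in> sets M" "D \<subseteq> A - B" "measure M B + measure M D \<le> c" for D
    using that by (intro V_Sup) (auto simp: V_def)
  ultimately show ?thesis
    by (blast intro: order_trans)
qed

lemma nonatomic_greedy_chain:
  assumes "0 \<le> c"
  obtains Bs where "incseq Bs" "\<And>n. Bs n \<in> sets M" "\<And>n. Bs n \<subseteq> A" "\<And>n. measure M (Bs n) \<le> c"
    "\<And>n D. D \<in> sets M \<Longrightarrow> D \<subseteq> A - Bs n \<Longrightarrow> measure M (Bs n) + measure M D \<le> c \<Longrightarrow>
      measure M D \<le> 2 * (measure M (Bs (Suc n)) - measure M (Bs n))"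
proof -
  define good where "good B \<longleftrightarrow> B \<in> sets M \<and> B \<subseteq> A \<and> measure M B \<le> c" for B
  have "\<forall>B. \<exists>C. good B \<longrightarrow> C \<in> sets M \<and> C \<subseteq> A - B \<and> measure M B + measure M C \<le> c \<and>
    (\<forall>D\<in>sets M. D \<subseteq> A - B \<and> measure M B + measure M D \<le> c \<longrightarrow> measure M D \<le> 2 * measure M C)"
    using nonatomic_greedy_step[of _ c A] unfolding good_def by (simp add: Bex_def)
  then obtain step where "\<forall>B. good B \<longrightarrow> step B \<in> sets M \<and> step B \<subseteq> A - B \<and>
      measure M B + measure M (step B) \<le> c \<and>
      (\<forall>D\<in>sets M. D \<subseteq> A - B \<and> measure M B + measure M D \<le> c \<longrightarrow> measure M D \<le> 2 * measure M (step B))"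
    by (rule choice[THEN exE])
  note step = this[rule_format]
  define Bs where "Bs = rec_nat {} (\<lambda>_ B. B \<union> step B)"
  have Bs_Suc: "Bs (Suc n) = Bs n \<union> step (Bs n)" for n
    by (simp add: Bs_def)
  have measure_Bs_Suc: "measure M (Bs (Suc n)) = measure M (Bs n) + measure M (step (Bs n))"
    if "good (Bs n)" for n
    using step[OF that] that unfolding Bs_Suc good_def by (intro finite_measure_Union) auto
  have good_Bs: "good (Bs n)" for n
  proof (induction n)
    case 0 then show ?case using assms by (simp add: Bs_def good_def)
  next
    case (Suc n) then show ?case
      using step[OF Suc] measure_Bs_Suc[OF Suc] unfolding Bs_Suc good_def by auto
  qed
  show ?thesis
  proof
    show "incseq Bs"
      by (rule incseq_SucI) (simp add: Bs_Suc)
    show "Bs n \<in> sets M" "Bs n \<subseteq> A" "measure M (Bs n) \<le> c" for n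
      using good_Bs[of n] unfolding good_def by auto
    show "measure M D \<le> 2 * (measure M (Bs (Suc n)) - measure M (Bs n))"
      if "D \<in> sets M" "D \<subseteq> A - Bs n" "measure M (Bs n) + measure M D \<le> c" for n D
      using step[OF good_Bs[of n]] that by (simp add: measure_Bs_Suc[OF good_Bs])
  qed
qed

text \<open>Along the greedy chain, a
  set \<open>D\<close> left over at the end would stay admissible at every step, so every step would add at
  least half its measure.\<close>
lemma nonatomic_exists_subset_measure_eq:
  assumes na: "nonatomic M" and A: "A \<in> sets M" and c: "0 \<le> c" "c \<le> measure M A"
  shows "\<exists>B\<in>sets M. B \<subseteq> A \<and> measure M B = c"
proof -
  obtain Bs where Bs: "incseq Bs" "\<And>n. Bs n \<in> sets M" "\<And>n. Bs n \<subseteq> A" "\<And>n. measure M (Bs n) \<le> c"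
    and greedy: "\<And>n D. D \<in> sets M \<Longrightarrow> D \<subseteq> A - Bs n \<Longrightarrow> measure M (Bs n) + measure M D \<le> c \<Longrightarrow>
      measure M D \<le> 2 * (measure M (Bs (Suc n)) - measure M (Bs n))"
    using nonatomic_greedy_chain[OF c(1)] by blast
  define U where "U = (\<Union>n. Bs n)"
  have U: "U \<in> sets M" "U \<subseteq> A"
    using Bs unfolding U_def by auto
  have lim: "(\<lambda>n. measure M (Bs n)) \<longlonglongrightarrow> measure M U"
    unfolding U_def using Bs(1,2) by (intro finite_Lim_measure_incseq) auto
  have "measure M U \<le> c"
    using Bs(4) by (intro LIMSEQ_le_const2[OF lim]) auto
  moreover have "\<not> measure M U < c"
  proof
    assume lt: "measure M U < c"
    have "0 < measure M (A - U)"
      using finite_measure_Diff[OF A U] lt c by simp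
    then obtain D where D: "D \<in> sets M" "D \<subseteq> A - U" "0 < measure M D" "measure M D \<le> c - measure M U"
      using nonatomic_exists_small_subset[OF na _ _, of "A - U" "c - measure M U"] lt A U by auto
    have D_step: "measure M D \<le> 2 * (measure M (Bs (Suc n)) - measure M (Bs n))" for n
    proof (rule greedy[OF D(1)])
      show "D \<subseteq> A - Bs n"
        using D(2) unfolding U_def by blast
      have "measure M (Bs n) \<le> measure M U"
        using U(1) unfolding U_def by (intro finite_measure_mono) auto
      then show "measure M (Bs n) + measure M D \<le> c"
        using D(4) by linarith
    qed
    have growth: "real n * measure M D \<le> 2 * measure M (Bs n)" for n
    proof (induction n)
      case (Suc n)
      then show ?case
        using D_step[of n] by (simp add: algebra_simps)
    qed simp
    obtain n :: nat where "2 * c / measure M D < real n"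
      using reals_Archimedean2 by blast
    then have "2 * c < real n * measure M D"
      using D(3) by (simp add: pos_divide_less_eq)
    then show False
      using growth[of n] Bs(4)[of n] by linarith
  qed
  ultimately show ?thesis
    using U by (intro bexI[of _ U]) auto
qed

lemma nonatomic_exists_subset_measure_eq_integral:
  assumes na: "nonatomic M" and A: "A \<in> sets M" and [measurable]: "\<tau> \<in> borel_measurable M"
    and \<tau>: "\<And>t. t \<in> space M \<Longrightarrow> 0 \<le> \<tau> t \<and> \<tau> t \<le> 1"
  shows "\<exists>B\<in>sets M. B \<subseteq> A \<and> measure M B = (\<integral>t. indicator A t * \<tau> t \<partial>M)"
proof (rule nonatomic_exists_subset_measure_eq[OF na A])
  show "0 \<le> (\<integral>t. indicator A t * \<tau> t \<partial>M)"
    using \<tau> by (intro integral_nonneg_AE) (auto simp: indicator_def)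
  have "integrable M (\<lambda>t. indicator A t :: real)" "integrable M (\<lambda>t. indicator A t * \<tau> t)"
    using A \<tau> by (intro integrable_const_bound[where B=1]; auto simp: indicator_def)+
  then have "(\<integral>t. indicator A t * \<tau> t \<partial>M) \<le> (\<integral>t. indicator A t \<partial>M)"
    using \<tau> by (intro integral_mono) (auto simp: indicator_def)
  then show "(\<integral>t. indicator A t * \<tau> t \<partial>M) \<le> measure M A"
    using A by simp
qed

lemma nonatomic_exists_set_balanced_on_level_sets:
  fixes k :: "'a \<Rightarrow> nat" and \<tau> :: "'a \<Rightarrow> real"
  assumes na: "nonatomic M" and k [measurable]: "k \<in> M \<rightarrow>\<^sub>M count_space UNIV"
    and [measurable]: "\<tau> \<in> borel_measurable M"
    and \<tau>: "\<And>t. t \<in> space M \<Longrightarrow> 0 \<le> \<tau> t \<and> \<tau> t \<le> 1"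
  shows "\<exists>E\<in>sets M. measure M E = (\<integral>t. \<tau> t \<partial>M) \<and>
    (\<forall>j. (\<integral>t. indicator {t \<in> space M. k t = j} t * (indicator E t - \<tau> t) \<partial>M) = 0)"
proof -
  define A where "A j = {t \<in> space M. k t = j}" for j
  have A [measurable]: "A j \<in> sets M" for j
    unfolding A_def by measurable
  have "\<forall>j. \<exists>B. B \<in> sets M \<and> B \<subseteq> A j \<and> measure M B = (\<integral>t. indicator (A j) t * \<tau> t \<partial>M)"
    using nonatomic_exists_subset_measure_eq_integral[OF na A _ \<tau>] by (simp add: Bex_def)
  then obtain B where "\<forall>j. B j \<in> sets M \<and> B j \<subseteq> A j \<and> measure M (B j) = (\<integral>t. indicator (A j) t * \<tau> t \<partial>M)"
    by (rule choice[THEN exE])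
  then have B: "\<And>j. B j \<in> sets M" "\<And>j. B j \<subseteq> A j"
    "\<And>j. measure M (B j) = (\<integral>t. indicator (A j) t * \<tau> t \<partial>M)"
    by auto
  define E where "E = (\<Union>j. B j)"
  have E [measurable]: "E \<in> sets M"
    unfolding E_def using B(1) by blast
  have ind: "indicator (A j) t * indicator E t = (indicator (B j) t :: real)" for j t
    using B(2) unfolding E_def A_def by (auto simp: indicator_def)
  have balanced: "(\<integral>t. indicator (A j) t * (indicator E t - \<tau> t) \<partial>M) = 0" for j
  proof -
    have "integrable M (\<lambda>t. indicator (B j) t :: real)"
      using B(1)[of j] by (intro integrable_real_indicator) (simp_all add: emeasure_eq_measure)
    moreover have "integrable M (\<lambda>t. indicator (A j) t * \<tau> t)"
      using \<tau> by (intro integrable_const_bound[where B=1]) (auto simp: indicator_def)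
    ultimately show ?thesis
      using B(1,3) by (simp add: right_diff_distrib ind)
  qed
  have int_E: "integrable M (\<lambda>t. indicator E t - \<tau> t)"
    using \<tau> by (intro integrable_const_bound[where B=1]) (auto simp: indicator_def)
  have "(\<integral>t. indicator E t - \<tau> t \<partial>M) = 0"
    using integral_eq_suminf_level_sets[OF k int_E] balanced by (simp add: A_def)
  then have "measure M E = (\<integral>t. \<tau> t \<partial>M)"
    using int_E \<tau> by (subst (asm) Bochner_Integration.integral_diff)
      (auto intro!: integrable_const_bound[where B=1])
  then show ?thesis
    using E balanced unfolding A_def by blast
qed

end

lemma exists_pos_linear_quadratic_le:
  fixes a b \<epsilon> :: real
  assumes "0 \<le> a" "0 \<le> b" "0 < \<epsilon>"
  shows "\<exists>r>0. a * r + b * r\<^sup>2 \<le> \<epsilon>"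
proof -
  define r where "r = min 1 (\<epsilon> / (a + b + 1))"
  have ab: "0 < a + b + 1"
    using assms by simp
  have r: "0 < r" "r \<le> 1"
    using assms ab by (auto simp: r_def)
  have "r * (a + b + 1) \<le> \<epsilon> / (a + b + 1) * (a + b + 1)"
    using ab by (intro mult_right_mono) (auto simp: r_def)
  then have r_eps: "r * (a + b + 1) \<le> \<epsilon>"
    using ab by simp
  have "b * r\<^sup>2 \<le> b * r"
    using r assms by (intro mult_left_mono) (auto simp: power2_eq_square mult_le_cancel_right1)
  then have "a * r + b * r\<^sup>2 \<le> r * (a + b + 1)"
    using r by (simp add: algebra_simps)
  then show ?thesis
    using r r_eps by (intro exI[of _ r]) auto
qed

lemma separable_space_dense_sequence:
  assumes "separable_space (euclidean :: 'v::metric_space topology)"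
  obtains d :: "nat \<Rightarrow> 'v::metric_space" where "\<And>x e. 0 < e \<Longrightarrow> \<exists>k. dist x (d k) < e"
proof -
  obtain C :: "'v set" where C: "countable C" "closure C = UNIV"
    using assms unfolding separable_space_def by auto
  then have "C \<noteq> {}" by auto
  have "\<exists>k. dist x (from_nat_into C k) < e" if e: "0 < e" for x e
  proof -
    have "x \<in> closure C"
      using C(2) by simp
    then obtain y where "y \<in> C" "dist y x < e"
      using e closure_approachable by blast
    then show ?thesis
      using range_from_nat_into[OF \<open>C \<noteq> {}\<close> C(1)] by (metis dist_commute rangeE)
  qed
  then show ?thesis by (rule that)
qed

locale bessel_family = finite_measure M for M :: "'b measure" +
  fixes \<phi> :: "'b \<Rightarrow> 'a::{complex_inner, complete_space}" and B :: real
  assumes measurable_coeff [measurable]: "\<And>f. (\<lambda>t. cinner f (\<phi> t)) \<in> borel_measurable M"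
    and bound_nonneg: "0 \<le> B"
    and integrable_coeff_square: "\<And>f. integrable M (\<lambda>t. (cmod (cinner f (\<phi> t)))\<^sup>2)"
    and integral_coeff_square_le: "\<And>f. (\<integral>t. (cmod (cinner f (\<phi> t)))\<^sup>2 \<partial>M) \<le> B * (norm f)\<^sup>2"
begin

lemma measurable_coeff' [measurable]: "(\<lambda>t. cinner (\<phi> t) h) \<in> borel_measurable M"
proof -
  have "(\<lambda>t. cnj (cinner h (\<phi> t))) \<in> borel_measurable M"
    by (rule borel_measurable_continuous_on[OF _ measurable_coeff])
      (rule linear_continuous_on[OF bounded_linear_cnj])
  then show ?thesis
    by (subst (asm) cinner_commute[symmetric]) simp
qed

lemma sqrt_integral_coeff_square_le: "sqrt (\<integral>t. (cmod (cinner f (\<phi> t)))\<^sup>2 \<partial>M) \<le> sqrt B * norm f"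
  using real_sqrt_le_mono[OF integral_coeff_square_le[of f]] by (simp add: real_sqrt_mult)

lemma integrable_coeff_product:
  "integrable M (\<lambda>t. cmod (cinner f (\<phi> t)) * cmod (cinner g (\<phi> t)))"
  by (intro integrable_mult_of_square_integrable integrable_coeff_square) measurable

lemma integral_coeff_product_le:
  "(\<integral>t. cmod (cinner f (\<phi> t)) * cmod (cinner g (\<phi> t)) \<partial>M) \<le> B * norm f * norm g"
proof -
  have "(\<integral>t. cmod (cinner f (\<phi> t)) * cmod (cinner g (\<phi> t)) \<partial>M)
      \<le> sqrt (\<integral>t. (cmod (cinner f (\<phi> t)))\<^sup>2 \<partial>M) * sqrt (\<integral>t. (cmod (cinner g (\<phi> t)))\<^sup>2 \<partial>M)"
    by (intro integral_mult_le_Cauchy_Schwarz integrable_coeff_square) auto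
  also have "\<dots> \<le> (sqrt B * norm f) * (sqrt B * norm g)"
    by (intro mult_mono sqrt_integral_coeff_square_le) (auto simp: bound_nonneg)
  also have "\<dots> = B * norm f * norm g"
    using bound_nonneg by (simp add: algebra_simps)
  finally show ?thesis .
qed

lemma integrable_coeff: "integrable M (\<lambda>t. cmod (cinner f (\<phi> t)))"
  using integrable_mult_of_square_integrable[of "\<lambda>t. cmod (cinner f (\<phi> t))" M "\<lambda>_. 1"]
  by (simp add: integrable_coeff_square)

lemma integral_coeff_le:
  "(\<integral>t. cmod (cinner f (\<phi> t)) \<partial>M) \<le> sqrt (measure M (space M)) * sqrt B * norm f"
proof -
  have "(\<integral>t. cmod (cinner f (\<phi> t)) * 1 \<partial>M)
      \<le> sqrt (\<integral>t. (cmod (cinner f (\<phi> t)))\<^sup>2 \<partial>M) * sqrt (\<integral>t. 1\<^sup>2 \<partial>M)"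
    by (intro integral_mult_le_Cauchy_Schwarz integrable_coeff_square) auto
  also have "\<dots> \<le> (sqrt B * norm f) * sqrt (measure M (space M))"
    by (intro mult_mono sqrt_integral_coeff_square_le) (auto simp: bound_nonneg)
  finally show ?thesis
    by (simp add: ac_simps)
qed

context
  fixes w :: "'b \<Rightarrow> real"
  assumes w [measurable]: "w \<in> borel_measurable M" and w_le_1: "\<And>t. t \<in> space M \<Longrightarrow> \<bar>w t\<bar> \<le> 1"
begin

lemma norm_weighted_coeff_product_le:
  "t \<in> space M \<Longrightarrow> cmod (complex_of_real (w t) * cinner f (\<phi> t) * cinner (\<phi> t) h)
    \<le> cmod (cinner f (\<phi> t)) * cmod (cinner h (\<phi> t))"
  using w_le_1[of t] by (simp add: norm_mult cmod_cinner_commute[of "\<phi> t" h] mult.assoc mult_left_le_one_le)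

lemma integrable_weighted_coeff_product:
  "integrable M (\<lambda>t. complex_of_real (w t) * cinner f (\<phi> t) * cinner (\<phi> t) h)"
  by (rule Bochner_Integration.integrable_bound[OF integrable_coeff_product[of f h]])
    (auto simp: norm_weighted_coeff_product_le)

lemma norm_integral_weighted_coeff_product_le:
  "cmod (\<integral>t. complex_of_real (w t) * cinner f (\<phi> t) * cinner (\<phi> t) h \<partial>M) \<le> B * norm f * norm h"
proof -
  have "cmod (\<integral>t. complex_of_real (w t) * cinner f (\<phi> t) * cinner (\<phi> t) h \<partial>M)
      \<le> (\<integral>t. cmod (complex_of_real (w t) * cinner f (\<phi> t) * cinner (\<phi> t) h) \<partial>M)"
    by (rule integral_norm_bound)
  also have "\<dots> \<le> (\<integral>t. cmod (cinner f (\<phi> t)) * cmod (cinner h (\<phi> t)) \<partial>M)"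
    by (intro integral_mono integrable_coeff_product norm_weighted_coeff_product_le
        integrable_norm integrable_weighted_coeff_product)
  also have "\<dots> \<le> B * norm f * norm h"
    by (rule integral_coeff_product_le)
  finally show ?thesis .
qed

lemma exists_weighted_frame_vector:
  "\<exists>g. \<forall>h. cinner g h = (\<integral>t. complex_of_real (w t) * cinner f (\<phi> t) * cinner (\<phi> t) h \<partial>M)"
proof (rule riesz_representation_conj)
  show "(\<integral>t. complex_of_real (w t) * cinner f (\<phi> t) * cinner (\<phi> t) (x + y) \<partial>M)
      = (\<integral>t. complex_of_real (w t) * cinner f (\<phi> t) * cinner (\<phi> t) x \<partial>M)
      + (\<integral>t. complex_of_real (w t) * cinner f (\<phi> t) * cinner (\<phi> t) y \<partial>M)" for x y
    by (simp add: cinner_add_right distrib_left integrable_weighted_coeff_product)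
  show "(\<integral>t. complex_of_real (w t) * cinner f (\<phi> t) * cinner (\<phi> t) (a *\<^sub>C x) \<partial>M)
      = cnj a * (\<integral>t. complex_of_real (w t) * cinner f (\<phi> t) * cinner (\<phi> t) x \<partial>M)" for a x
    by (simp add: cinner_scaleC_right ac_simps)
  show "cmod (\<integral>t. complex_of_real (w t) * cinner f (\<phi> t) * cinner (\<phi> t) x \<partial>M) \<le> (B * norm f) * norm x" for x
    using norm_integral_weighted_coeff_product_le by simp
qed

lemma norm_weighted_coeff_product_diff_le:
  assumes "t \<in> space M" "norm (\<phi> t - p) \<le> r"
  shows "cmod (complex_of_real (w t) * cinner f (\<phi> t) * cinner (\<phi> t) h
      - complex_of_real (w t) * (cinner f p * cinner p h))
    \<le> r * norm f * cmod (cinner h (\<phi> t)) + r * norm h * cmod (cinner f (\<phi> t)) + r\<^sup>2 * norm f * norm h"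
proof -
  have "cmod (complex_of_real (w t) * cinner f (\<phi> t) * cinner (\<phi> t) h
      - complex_of_real (w t) * (cinner f p * cinner p h))
      = \<bar>w t\<bar> * cmod (cinner f (\<phi> t) * cinner (\<phi> t) h - cinner f p * cinner p h)"
    by (simp add: norm_mult mult.assoc right_diff_distrib[symmetric])
  also have "\<dots> \<le> 1 * (r * norm f * cmod (cinner h (\<phi> t)) + r * norm h * cmod (cinner f (\<phi> t))
      + r\<^sup>2 * norm f * norm h)"
    using w_le_1[OF assms(1)] norm_cinner_product_diff_le[OF assms(2)] by (intro mult_mono) auto
  finally show ?thesis by simp
qed

context
  fixes d :: "nat \<Rightarrow> 'a" and k :: "'b \<Rightarrow> nat" and r :: real
  assumes k [measurable]: "k \<in> M \<rightarrow>\<^sub>M count_space UNIV" and close: "\<And>t. norm (\<phi> t - d (k t)) \<le> r"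
begin

lemma integrable_weighted_net_product:
  "integrable M (\<lambda>t. complex_of_real (w t) * (cinner f (d (k t)) * cinner (d (k t)) h))"
proof -
  let ?F = "\<lambda>t. complex_of_real (w t) * cinner f (\<phi> t) * cinner (\<phi> t) h"
  let ?G = "\<lambda>t. complex_of_real (w t) * (cinner f (d (k t)) * cinner (d (k t)) h)"
  have [measurable]: "(\<lambda>t. cinner f (d (k t)) * cinner (d (k t)) h) \<in> borel_measurable M"
    by (rule measurable_compose_countable'[where f="\<lambda>i t. cinner f (d i) * cinner (d i) h" and I=UNIV])
      (auto intro: k)
  have "integrable M (\<lambda>t. ?F t - ?G t)"
  proof (rule Bochner_Integration.integrable_bound)
    show "integrable M (\<lambda>t. r * norm f * cmod (cinner h (\<phi> t)) + r * norm h * cmod (cinner f (\<phi> t))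
        + r\<^sup>2 * norm f * norm h)"
      by (simp add: integrable_coeff)
    show "AE t in M. norm (?F t - ?G t) \<le> norm (r * norm f * cmod (cinner h (\<phi> t))
        + r * norm h * cmod (cinner f (\<phi> t)) + r\<^sup>2 * norm f * norm h)"
    proof (rule AE_I2)
      fix t assume "t \<in> space M"
      show "norm (?F t - ?G t) \<le> norm (r * norm f * cmod (cinner h (\<phi> t))
          + r * norm h * cmod (cinner f (\<phi> t)) + r\<^sup>2 * norm f * norm h)"
        by (rule order_trans[OF norm_weighted_coeff_product_diff_le[OF \<open>t \<in> space M\<close> close]])
          (simp only: real_norm_def abs_ge_self)
    qed
  qed measurable
  from Bochner_Integration.integrable_diff[OF integrable_weighted_coeff_product[of f h] this]
  show ?thesis by simp
qed

text \<open>For a weight that is balanced on the level sets of \<open>k\<close>, the integral vanishes after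
  replacing \<open>\<phi> t\<close> by the vector \<open>d (k t)\<close>, which is constant on each level set; what remains
  is the error of that replacement.\<close>
lemma norm_integral_balanced_coeff_product_le:
  assumes balanced: "\<And>j. (\<integral>t. indicator {t \<in> space M. k t = j} t * w t \<partial>M) = 0"
  shows "cmod (\<integral>t. complex_of_real (w t) * cinner f (\<phi> t) * cinner (\<phi> t) h \<partial>M)
    \<le> (2 * sqrt (measure M (space M)) * sqrt B * r + measure M (space M) * r\<^sup>2) * norm f * norm h"
proof -
  let ?F = "\<lambda>t. complex_of_real (w t) * cinner f (\<phi> t) * cinner (\<phi> t) h"
  let ?G = "\<lambda>t. complex_of_real (w t) * (cinner f (d (k t)) * cinner (d (k t)) h)"
  let ?bound = "\<lambda>t. r * norm f * cmod (cinner h (\<phi> t)) + r * norm h * cmod (cinner f (\<phi> t))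
    + r\<^sup>2 * norm f * norm h"
  have r: "0 \<le> r"
    using close norm_ge_zero order_trans by blast
  have "(\<integral>t. ?G t \<partial>M) = 0"
    by (rule integral_mult_level_sets_eq_0[OF k balanced integrable_weighted_net_product])
  then have "(\<integral>t. ?F t \<partial>M) = (\<integral>t. ?F t - ?G t \<partial>M)"
    by (simp add: integrable_weighted_coeff_product integrable_weighted_net_product)
  then have "cmod (\<integral>t. ?F t \<partial>M) \<le> (\<integral>t. cmod (?F t - ?G t) \<partial>M)"
    using integral_norm_bound[of M "\<lambda>t. ?F t - ?G t"] by simp
  also have "\<dots> \<le> (\<integral>t. ?bound t \<partial>M)"
    using norm_weighted_coeff_product_diff_le[OF _ close]
    by (intro integral_mono) (auto simp: integrable_coeff integrable_weighted_coeff_product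
        integrable_weighted_net_product)
  also have "\<dots> = r * norm f * (\<integral>t. cmod (cinner h (\<phi> t)) \<partial>M)
      + r * norm h * (\<integral>t. cmod (cinner f (\<phi> t)) \<partial>M) + r\<^sup>2 * norm f * norm h * measure M (space M)"
    by (simp add: integrable_coeff)
  also have "\<dots> \<le> r * norm f * (sqrt (measure M (space M)) * sqrt B * norm h)
      + r * norm h * (sqrt (measure M (space M)) * sqrt B * norm f)
      + r\<^sup>2 * norm f * norm h * measure M (space M)"
    using r by (intro add_mono mult_left_mono integral_coeff_le) auto
  finally show ?thesis
    by (simp add: algebra_simps)
qed

end

end

lemma cinner_weighted_frame_op:
  assumes "\<tau> \<in> borel_measurable M" "\<And>t. t \<in> space M \<Longrightarrow> \<bar>\<tau> t\<bar> \<le> 1"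
  shows "cinner (weighted_frame_op M \<phi> \<tau> f) h =
    (\<integral>t. complex_of_real (\<tau> t) * cinner f (\<phi> t) * cinner (\<phi> t) h \<partial>M)"
  unfolding weighted_frame_op_def
  by (rule cinner_The_representation[OF exists_weighted_frame_vector[OF assms]])

lemma cinner_partial_frame_op:
  assumes "E \<in> sets M"
  shows "cinner (partial_frame_op M \<phi> E f) h =
    (\<integral>t. complex_of_real (indicator E t) * cinner f (\<phi> t) * cinner (\<phi> t) h \<partial>M)"
proof -
  have "(\<integral>t\<in>E. cinner f (\<phi> t) * cinner (\<phi> t) h \<partial>M)
      = (\<integral>t. complex_of_real (indicator E t) * cinner f (\<phi> t) * cinner (\<phi> t) h \<partial>M)" for h
    unfolding set_lebesgue_integral_def by (simp add: scaleR_conv_of_real mult.assoc)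
  moreover have "\<exists>g. \<forall>h. cinner g h = (\<integral>t. complex_of_real (indicator E t) * cinner f (\<phi> t) * cinner (\<phi> t) h \<partial>M)"
    using assms by (intro exists_weighted_frame_vector) auto
  ultimately show ?thesis
    unfolding partial_frame_op_def by (simp add: cinner_The_representation)
qed

lemma cinner_frame_op_diff:
  assumes "E \<in> sets M" "\<tau> \<in> borel_measurable M" "\<And>t. t \<in> space M \<Longrightarrow> \<bar>\<tau> t\<bar> \<le> 1"
  shows "cinner (partial_frame_op M \<phi> E f - weighted_frame_op M \<phi> \<tau> f) h =
    (\<integral>t. complex_of_real (indicator E t - \<tau> t) * cinner f (\<phi> t) * cinner (\<phi> t) h \<partial>M)"
  using assms
  by (simp add: cinner_diff_left cinner_partial_frame_op cinner_weighted_frame_op left_diff_distrib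
      integrable_weighted_coeff_product)

lemma measurable_norm_diff:
  fixes d :: "nat \<Rightarrow> 'a"
  assumes d: "\<And>x e. 0 < e \<Longrightarrow> \<exists>k. dist x (d k) < e"
  shows "(\<lambda>t. norm (\<phi> t - v)) \<in> borel_measurable M"
proof -
  have "{t \<in> space M. (norm (\<phi> t - v))\<^sup>2 \<le> s} =
      {t \<in> space M. \<forall>k. 2 * (Re (cinner (\<phi> t) (d k)) - Re (cinner v (d k))) - (norm (d k))\<^sup>2 \<le> s}" for s
    by (auto simp: power2_norm_le_iff_dense[OF d] cinner_diff_left)
  then have "(\<lambda>t. (norm (\<phi> t - v))\<^sup>2) \<in> borel_measurable M"
    unfolding borel_measurable_iff_le by simp
  then have "(\<lambda>t. sqrt ((norm (\<phi> t - v))\<^sup>2)) \<in> borel_measurable M"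
    by measurable
  then show ?thesis by simp
qed

lemma exists_measurable_nearest_index:
  fixes d :: "nat \<Rightarrow> 'a"
  assumes d: "\<And>x e. 0 < e \<Longrightarrow> \<exists>k. dist x (d k) < e" and r: "0 < r"
  obtains k where "k \<in> M \<rightarrow>\<^sub>M count_space UNIV" "\<And>t. norm (\<phi> t - d (k t)) < r"
proof
  define k where "k t = (LEAST j. norm (\<phi> t - d j) < r)" for t
  have ex: "\<exists>j. norm (\<phi> t - d j) < r" for t
    using d[OF r, of "\<phi> t"] by (simp add: dist_norm)
  show "norm (\<phi> t - d (k t)) < r" for t
    unfolding k_def by (rule LeastI_ex[OF ex])
  have [measurable]: "(\<lambda>t. norm (\<phi> t - d j)) \<in> borel_measurable M" for j
    by (rule measurable_norm_diff[OF d])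
  have "k t = j \<longleftrightarrow> norm (\<phi> t - d j) < r \<and> (\<forall>i<j. \<not> norm (\<phi> t - d i) < r)" for t j
  proof
    assume "k t = j"
    then show "norm (\<phi> t - d j) < r \<and> (\<forall>i<j. \<not> norm (\<phi> t - d i) < r)"
      using LeastI_ex[OF ex] not_less_Least unfolding k_def by blast
  next
    assume "norm (\<phi> t - d j) < r \<and> (\<forall>i<j. \<not> norm (\<phi> t - d i) < r)"
    then show "k t = j"
      unfolding k_def by (intro Least_equality) (auto simp: not_less[symmetric])
  qed
  then have "k -` {j} \<inter> space M = {t \<in> space M. norm (\<phi> t - d j) < r \<and> (\<forall>i<j. \<not> norm (\<phi> t - d i) < r)}" for j
    by auto
  then show "k \<in> M \<rightarrow>\<^sub>M count_space UNIV"
    unfolding measurable_count_space_eq2_countable by simp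
qed

theorem exists_set_partial_frame_op_approx:
  assumes na: "nonatomic M" and sep: "separable_space (euclidean :: 'a topology)"
    and \<tau> [measurable]: "\<tau> \<in> borel_measurable M" and \<tau>_01: "\<And>t. t \<in> space M \<Longrightarrow> 0 \<le> \<tau> t \<and> \<tau> t \<le> 1"
    and \<epsilon>: "0 < \<epsilon>"
  shows "\<exists>E\<in>sets M. onorm (\<lambda>f. partial_frame_op M \<phi> E f - weighted_frame_op M \<phi> \<tau> f) \<le> \<epsilon> \<and>
    measure M E \<le> (\<integral>t. \<tau> t \<partial>M)"
proof -
  define m where "m = measure M (space M)"
  obtain d :: "nat \<Rightarrow> 'a" where d: "\<And>x e. 0 < e \<Longrightarrow> \<exists>k. dist x (d k) < e"
    using separable_space_dense_sequence[OF sep] by blast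
  obtain r where r: "0 < r" "2 * sqrt m * sqrt B * r + m * r\<^sup>2 \<le> \<epsilon>"
    using exists_pos_linear_quadratic_le[of "2 * sqrt m * sqrt B" m \<epsilon>] \<epsilon> bound_nonneg
    by (auto simp: m_def)
  obtain k where k: "k \<in> M \<rightarrow>\<^sub>M count_space UNIV" "\<And>t. norm (\<phi> t - d (k t)) < r"
    using exists_measurable_nearest_index[OF d r(1)] by blast
  obtain E where E: "E \<in> sets M" "measure M E = (\<integral>t. \<tau> t \<partial>M)"
    "\<And>j. (\<integral>t. indicator {t \<in> space M. k t = j} t * (indicator E t - \<tau> t) \<partial>M) = 0"
    using nonatomic_exists_set_balanced_on_level_sets[OF na k(1) \<tau> \<tau>_01] by blast
  have \<tau>_abs: "\<And>t. t \<in> space M \<Longrightarrow> \<bar>\<tau> t\<bar> \<le> 1"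
    using \<tau>_01 by fastforce
  have "cmod (cinner (partial_frame_op M \<phi> E f - weighted_frame_op M \<phi> \<tau> f) h) \<le> \<epsilon> * norm f * norm h"
    for f h
  proof -
    have "cmod (cinner (partial_frame_op M \<phi> E f - weighted_frame_op M \<phi> \<tau> f) h)
        = cmod (\<integral>t. complex_of_real (indicator E t - \<tau> t) * cinner f (\<phi> t) * cinner (\<phi> t) h \<partial>M)"
      by (simp add: cinner_frame_op_diff[OF E(1) \<tau> \<tau>_abs])
    also have "\<dots> \<le> (2 * sqrt m * sqrt B * r + m * r\<^sup>2) * norm f * norm h"
      unfolding m_def
    proof (rule norm_integral_balanced_coeff_product_le)
      show "(\<lambda>t. indicator E t - \<tau> t) \<in> borel_measurable M"
        using E(1) by measurable
      show "\<bar>indicator E t - \<tau> t\<bar> \<le> 1" if "t \<in> space M" for t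
        using \<tau>_01[OF that] by (auto simp: indicator_def)
      show "norm (\<phi> t - d (k t)) \<le> r" for t
        using k(2)[of t] by simp
    qed (use k(1) E(3) in auto)
    also have "\<dots> \<le> \<epsilon> * norm f * norm h"
      using r by (intro mult_right_mono) auto
    finally show ?thesis .
  qed
  then show ?thesis
    using E \<epsilon> by (intro bexI[of _ E] conjI onorm_le_of_cinner_le) auto
qed

end

lemma continuous_bessel_family_imp_bessel_family:
  fixes \<phi> :: "'b \<Rightarrow> 'a::{complex_inner, complete_space}"
  assumes "finite_measure M" and "continuous_bessel_family M \<phi>"
  obtains B where "bessel_family M \<phi> B"
proof -
  obtain B0 where B0: "continuous_bessel M \<phi> B0"
    using assms(2) unfolding continuous_bessel_family_def by blast
  define B where "B = max B0 0"
  have measurable_coeff [measurable]: "(\<lambda>t. cinner f (\<phi> t)) \<in> borel_measurable M" for f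
    using B0 unfolding continuous_bessel_def by blast
  have nn_le: "(\<integral>\<^sup>+ t. ennreal ((cmod (cinner f (\<phi> t)))\<^sup>2) \<partial>M) \<le> ennreal (B * (norm f)\<^sup>2)" for f
  proof -
    have "(\<integral>\<^sup>+ t. ennreal ((cmod (cinner f (\<phi> t)))\<^sup>2) \<partial>M) \<le> ennreal (B0 * (norm f)\<^sup>2)"
      using B0 unfolding continuous_bessel_def by blast
    also have "\<dots> \<le> ennreal (B * (norm f)\<^sup>2)"
      unfolding B_def by (intro ennreal_leI mult_right_mono) auto
    finally show ?thesis .
  qed
  have integrable: "integrable M (\<lambda>t. (cmod (cinner f (\<phi> t)))\<^sup>2)" for f
    using nn_le[of f] by (intro integrableI_nonneg) (auto simp: order_le_less_trans)
  have le: "(\<integral>t. (cmod (cinner f (\<phi> t)))\<^sup>2 \<partial>M) \<le> B * (norm f)\<^sup>2" for f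
  proof -
    have "ennreal (\<integral>t. (cmod (cinner f (\<phi> t)))\<^sup>2 \<partial>M) \<le> ennreal (B * (norm f)\<^sup>2)"
      using nn_le[of f] nn_integral_eq_integral[OF integrable[of f]] by simp
    then show ?thesis
      unfolding B_def by simp
  qed
  have "bessel_family M \<phi> B"
    by (intro bessel_family.intro bessel_family_axioms.intro assms(1) measurable_coeff integrable le)
      (simp add: B_def)
  then show ?thesis ..
qed

theorem theorem3p6:
  fixes M :: "'b measure" and \<phi> :: "'b \<Rightarrow> 'a::{complex_inner, complete_space}"
    and \<tau> :: "'b \<Rightarrow> real" and \<epsilon> :: real
  assumes "finite_measure M"
    and "nonatomic M"
    and "separable_space (euclidean :: 'a topology)"
    and "continuous_bessel_family M \<phi>"
    and "\<tau> \<in> borel_measurable M"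
    and "\<forall>t\<in>space M. 0 \<le> \<tau> t \<and> \<tau> t \<le> 1"
    and "\<epsilon> > 0"
  shows "\<exists>E\<in>sets M.
           onorm (\<lambda>f. partial_frame_op M \<phi> E f - weighted_frame_op M \<phi> \<tau> f) \<le> \<epsilon> \<and>
           measure M E \<le> (\<integral> t. \<tau> t \<partial>M)"
proof -
  obtain B where "bessel_family M \<phi> B"
    using continuous_bessel_family_imp_bessel_family[OF assms(1,4)] .
  then interpret bessel_family M \<phi> B .
  show ?thesis
    using exists_set_partial_frame_op_approx assms(2,3,5-7) by blast
qed

end
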